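(* Let $p(x,y)$ be a real polynomial with $p(0,0)=0$, $\nabla p(0,0)=(0,0)$, $\dim\operatorname{Co}N_p=2$, such that for every $A\in\mathbb{N}^2$ the main $A$-quasi-homogeneous form of $p$ is nonnegative on $\mathbb{R}^2$. Let $A=(A_1,A_2)\in\mathcal{A}_p$ and suppose $\varphi_3^A\not\equiv 0$ and condition $(\tilde C2)_A$ holds. Let $x^{\omega_1}y^{\xi_1}$ be the monomial of the main term of $\varphi_3^A$. Then for every $u_0\in\tilde U_p(A)$ the system $x\neq0$, $y\neq0$, $x^{-A_2}y^{A_1}=u_0$, $x^{\omega_1}y^{\xi_1}g_3^A(u_0)<0$ has no real solution.
   Context: $\mathbb{N}=\{1,2,\dots\}$; $\mathbb{N}_0^2$ is the set of $(A_1,A_2)\in\mathbb{N}^2$ with $\gcd(A_1,A_2)=1$. $N_p$ is the support of $p$ and $\operatorname{Co}N_p$ its convex hull. For $A\in\mathbb{N}^2$ the main $A$-quasi-homogeneous form of $p$ is the sum of the terms of $p$ whose exponent vectors $k$ minimize $\langle A,k\rangle$ over $N_p$. For $A\in\mathbb{N}_0^2$, with $B_1^A<B_2^A<\dots$ the distinct values of $\langle A,k\rangle$ on $N_p$, $\varphi_i^A$ is the sum of terms of $p$ with $\langle A,k\rangle=B_i^A$. For such a form $\sum_i c_ix^{\gamma_i}y^{\delta_i}$ ($c_i\ne0$, $\gamma_1>\gamma_2>\dots$), its main term is $c_1x^{\gamma_1}y^{\delta_1}$ and its characteristic polynomial is $\sum_ic_iu^{(\gamma_1-\gamma_i)/A_2}$;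 $g_1^A,g_2^A,g_3^A$ are those of $\varphi_1^A,\varphi_2^A,\varphi_3^A$. $\mathcal{A}_p$ is the set of $A\in\mathbb{N}_0^2$ such that $\varphi_1^A$ has at least three terms, $g_1^A\ge0$ on $\mathbb{R}$, and $g_1^A$ has a real root. $\tilde U_p(A)=\{u\in\mathbb{R}: g_1^A(u)=0,\ g_2^A(u)=0\}$. Condition $(\tilde C2)_A$: for all $(x,y)$ with $\varphi_1^A(x,y)=\varphi_2^A(x,y)=0$, $x\neq0$, $y\neq0$, one has $\varphi_3^A(x,y)>0$; and $\varphi_2^A(x,y)\ge0$ for all $(x,y)\in\mathbb{R}^2$. *)

theory Defs
  imports "HOL-Analysis.Analysis"
begin

text \<open>A real polynomial in two variables is represented by its coefficient function
  c :: nat \<times> nat \<Rightarrow> real with finite support; c (i,j) is the coefficient of x^i y^j.\<close>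

type_synonym bpoly = "nat \<times> nat \<Rightarrow> real"

definition supp :: "bpoly \<Rightarrow> (nat \<times> nat) set" where
  "supp c = {k. c k \<noteq> 0}"

definition is_bpoly :: "bpoly \<Rightarrow> bool" where
  "is_bpoly c \<longleftrightarrow> finite (supp c)"

definition eval :: "bpoly \<Rightarrow> real \<Rightarrow> real \<Rightarrow> real" where
  "eval c x y = (\<Sum>k\<in>supp c. c k * x ^ fst k * y ^ snd k)"

definition wdeg :: "nat \<times> nat \<Rightarrow> nat \<times> nat \<Rightarrow> nat" where
  "wdeg A k = fst A * fst k + snd A * snd k"

definition newton_hull :: "bpoly \<Rightarrow> (real \<times> real) set" where
  "newton_hull c = convex hull ((\<lambda>k. (real (fst k), real (snd k))) ` supp c)"

definition in_N2 :: "nat \<times> nat \<Rightarrow> bool" where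
  "in_N2 A \<longleftrightarrow> fst A \<ge> 1 \<and> snd A \<ge> 1"

definition in_N02 :: "nat \<times> nat \<Rightarrow> bool" where
  "in_N02 A \<longleftrightarrow> in_N2 A \<and> coprime (fst A) (snd A)"

definition main_qh_form :: "nat \<times> nat \<Rightarrow> bpoly \<Rightarrow> bpoly" where
  "main_qh_form A c = (\<lambda>k. if k \<in> supp c \<and> wdeg A k = Min (wdeg A ` supp c) then c k else 0)"

definition wlevels :: "nat \<times> nat \<Rightarrow> bpoly \<Rightarrow> nat list" where
  "wlevels A c = sorted_list_of_set (wdeg A ` supp c)"

text \<open>phi A c i = \<phi>_i^A (1-based); it is the zero polynomial if there are fewer than i levels.\<close>
definition phi :: "nat \<times> nat \<Rightarrow> bpoly \<Rightarrow> nat \<Rightarrow> bpoly" where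
  "phi A c i = (\<lambda>k. if 1 \<le> i \<and> i \<le> length (wlevels A c) \<and> k \<in> supp c
                        \<and> wdeg A k = wlevels A c ! (i - 1) then c k else 0)"

definition main_exp :: "bpoly \<Rightarrow> nat \<times> nat" where
  "main_exp f = (SOME k. k \<in> supp f \<and> fst k = Max (fst ` supp f))"

definition char_poly :: "nat \<times> nat \<Rightarrow> bpoly \<Rightarrow> real \<Rightarrow> real" where
  "char_poly A f u = (\<Sum>k\<in>supp f. f k * u ^ ((fst (main_exp f) - fst k) div snd A))"

definition gA :: "nat \<times> nat \<Rightarrow> bpoly \<Rightarrow> nat \<Rightarrow> real \<Rightarrow> real" where
  "gA A c i = char_poly A (phi A c i)"

definition calA :: "bpoly \<Rightarrow> (nat \<times> nat) set" where
  "calA c = {A. in_N02 A \<and> card (supp (phi A c 1)) \<ge> 3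
               \<and> (\<forall>u. gA A c 1 u \<ge> 0) \<and> (\<exists>u. gA A c 1 u = 0)}"

definition U_tilde :: "bpoly \<Rightarrow> nat \<times> nat \<Rightarrow> real set" where
  "U_tilde c A = {u. gA A c 1 u = 0 \<and> gA A c 2 u = 0}"

definition cond_C2 :: "bpoly \<Rightarrow> nat \<times> nat \<Rightarrow> bool" where
  "cond_C2 c A \<longleftrightarrow>
     (\<forall>x y. eval (phi A c 1) x y = 0 \<and> eval (phi A c 2) x y = 0 \<and> x \<noteq> 0 \<and> y \<noteq> 0
              \<longrightarrow> eval (phi A c 3) x y > 0)
   \<and> (\<forall>x y. eval (phi A c 2) x y \<ge> 0)"

end

theory Submission
  imports Defs
begin

text \<open>On a form that is quasi-homogeneous of weight A, every term is the main monomial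
  times a power of u = x^(-A2) y^A1, the exponent being a natural number because A1 and A2 are
  coprime; so for x \<noteq> 0 we have \<phi>_i(x,y) = x^\<gamma>_i y^\<delta>_i g_i(u). At a point with
  u = u0 in U_p(A) this makes \<phi>_1 and \<phi>_2 vanish, and then (C2) forces
  \<phi>_3(x,y) = x^\<omega>_1 y^\<xi>_1 g_3(u0) > 0. Besides finiteness of the support, only the
  coprimality of A and (C2) are needed.\<close>

lemma weighted_exponents_shift:
  fixes a1 a2 g d g1 d1 :: nat
  assumes "coprime a1 a2" and "a2 > 0"
    and "a1 * g + a2 * d = a1 * g1 + a2 * d1" and "g \<le> g1"
  obtains m where "g1 = g + a2 * m" and "d = d1 + a1 * m"
proof -
  have "a2 * d1 \<le> a2 * d"
    using assms(3) mult_le_mono2[OF \<open>g \<le> g1\<close>, of a1] by linarith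
  then have "d1 \<le> d"
    using \<open>a2 > 0\<close> by simp
  then have diff: "a1 * (g1 - g) = a2 * (d - d1)"
    using assms(3,4) by (simp add: diff_mult_distrib2)
  then have "a2 dvd g1 - g"
    using assms(1) by (metis coprime_commute coprime_dvd_mult_right_iff dvd_triv_left)
  then obtain m where m: "g1 - g = a2 * m" by blast
  then have "a1 * m = d - d1"
    using diff assms(2) by (simp add: ac_simps)
  show ?thesis
  proof
    show "g1 = g + a2 * m" using m \<open>g \<le> g1\<close> by simp
    show "d = d1 + a1 * m" using \<open>a1 * m = d - d1\<close> \<open>d1 \<le> d\<close> by simp
  qed
qed

lemma monomial_eq_main_monomial_times_power:
  fixes x y :: "'a::field"
  assumes "coprime a1 a2" and "a2 > 0" and "x \<noteq> 0"
    and "a1 * g + a2 * d = a1 * g1 + a2 * d1" and "g \<le> g1"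
  shows "x ^ g * y ^ d = x ^ g1 * y ^ d1 * (inverse (x ^ a2) * y ^ a1) ^ ((g1 - g) div a2)"
proof -
  obtain m where g1: "g1 = g + a2 * m" and d: "d = d1 + a1 * m"
    using weighted_exponents_shift assms(1,2,4,5) by blast
  have "x ^ g1 * y ^ d1 * (inverse (x ^ a2) * y ^ a1) ^ m
      = x ^ g * y ^ d * ((x ^ a2) ^ m * inverse (x ^ a2) ^ m)"
    unfolding g1 d by (simp add: power_add power_mult power_mult_distrib ac_simps)
  also have "\<dots> = x ^ g * y ^ d"
    using \<open>x \<noteq> 0\<close> by (simp add: power_mult_distrib[symmetric])
  finally show ?thesis
    using g1 \<open>a2 > 0\<close> by simp
qed

lemma main_exp_in_supp_Max:
  assumes "finite (supp f)" and "supp f \<noteq> {}"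
  shows "main_exp f \<in> supp f" and "fst (main_exp f) = Max (fst ` supp f)"
proof -
  have "Max (fst ` supp f) \<in> fst ` supp f"
    using assms by simp
  then have "\<exists>k. k \<in> supp f \<and> fst k = Max (fst ` supp f)"
    by force
  then have "main_exp f \<in> supp f \<and> fst (main_exp f) = Max (fst ` supp f)"
    unfolding main_exp_def by (rule someI_ex)
  then show "main_exp f \<in> supp f" and "fst (main_exp f) = Max (fst ` supp f)"
    by auto
qed

lemma eval_quasi_homogeneous:
  fixes x y :: real
  assumes fin: "finite (supp f)" and cop: "coprime (fst A) (snd A)" and "snd A > 0"
    and "x \<noteq> 0" and level: "\<And>k. k \<in> supp f \<Longrightarrow> wdeg A k = B"
  shows "eval f x y = x ^ fst (main_exp f) * y ^ snd (main_exp f)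
           * char_poly A f (inverse (x ^ snd A) * y ^ fst A)"
proof (cases "supp f = {}")
  case True
  then show ?thesis by (simp add: eval_def char_poly_def)
next
  case False
  let ?e = "main_exp f"
  note e = main_exp_in_supp_Max[OF fin False]
  show ?thesis
    unfolding eval_def char_poly_def sum_distrib_left
  proof (rule sum.cong[OF refl])
    fix k assume k: "k \<in> supp f"
    have "fst k \<le> fst ?e"
      using e k fin by simp
    moreover have "fst A * fst k + snd A * snd k = fst A * fst ?e + snd A * snd ?e"
      using level[OF k] level[OF e(1)] unfolding wdeg_def by simp
    ultimately show "f k * x ^ fst k * y ^ snd k = x ^ fst ?e * y ^ snd ?e *
          (f k * (inverse (x ^ snd A) * y ^ fst A) ^ ((fst ?e - fst k) div snd A))"
      using monomial_eq_main_monomial_times_power[OF cop \<open>snd A > 0\<close> \<open>x \<noteq> 0\<close>, where y=y]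
      by (simp add: ac_simps)
  qed
qed

lemma finite_supp_phi: "is_bpoly c \<Longrightarrow> finite (supp (phi A c i))"
  unfolding is_bpoly_def
  by (rule finite_subset[rotated]) (auto simp: supp_def phi_def)

lemma wdeg_supp_phi: "k \<in> supp (phi A c i) \<Longrightarrow> wdeg A k = wlevels A c ! (i - 1)"
  unfolding supp_def phi_def by (auto split: if_splits)

lemma eval_phi_eq_gA:
  fixes x y :: real
  assumes "is_bpoly c" and "in_N02 A" and "x \<noteq> 0"
  shows "eval (phi A c i) x y = x ^ fst (main_exp (phi A c i)) * y ^ snd (main_exp (phi A c i))
           * gA A c i (inverse (x ^ snd A) * y ^ fst A)"
  unfolding gA_def
  using assms
  by (intro eval_quasi_homogeneous[OF finite_supp_phi _ _ _ wdeg_supp_phi])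
     (auto simp: in_N02_def in_N2_def)

theorem mainTheorem11:
  fixes c :: bpoly and A :: "nat \<times> nat"
  assumes poly: "is_bpoly c"
    and zero: "eval c 0 0 = 0"
    and grad: "((\<lambda>z. eval c (fst z) (snd z)) has_derivative (\<lambda>h. 0)) (at (0, 0))"
    and dim2: "aff_dim (newton_hull c) = 2"
    and nonneg: "\<forall>B. in_N2 B \<longrightarrow> (\<forall>x y. eval (main_qh_form B c) x y \<ge> 0)"
    and A: "A \<in> calA c"
    and phi3: "phi A c 3 \<noteq> (\<lambda>_. 0)"
    and C2: "cond_C2 c A"
  shows "\<forall>u0 \<in> U_tilde c A. \<not> (\<exists>x y::real. x \<noteq> 0 \<and> y \<noteq> 0
            \<and> inverse (x ^ snd A) * y ^ fst A = u0
            \<and> x ^ fst (main_exp (phi A c 3)) * y ^ snd (main_exp (phi A c 3)) * gA A c 3 u0 < 0)"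
proof (intro ballI notI)
  fix u0 assume u0: "u0 \<in> U_tilde c A"
  assume "\<exists>x y::real. x \<noteq> 0 \<and> y \<noteq> 0
            \<and> inverse (x ^ snd A) * y ^ fst A = u0
            \<and> x ^ fst (main_exp (phi A c 3)) * y ^ snd (main_exp (phi A c 3)) * gA A c 3 u0 < 0"
  then obtain x y :: real where "x \<noteq> 0" and "y \<noteq> 0"
    and u: "inverse (x ^ snd A) * y ^ fst A = u0"
    and neg: "x ^ fst (main_exp (phi A c 3)) * y ^ snd (main_exp (phi A c 3)) * gA A c 3 u0 < 0"
    by blast
  have eval_phi: "eval (phi A c i) x y
      = x ^ fst (main_exp (phi A c i)) * y ^ snd (main_exp (phi A c i)) * gA A c i u0" for i
    using eval_phi_eq_gA[OF poly _ \<open>x \<noteq> 0\<close>] A u by (auto simp: calA_def)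
  have "eval (phi A c 1) x y = 0" and "eval (phi A c 2) x y = 0"
    using u0 eval_phi by (auto simp: U_tilde_def)
  then have "eval (phi A c 3) x y > 0"
    using C2 \<open>x \<noteq> 0\<close> \<open>y \<noteq> 0\<close> unfolding cond_C2_def by blast
  then show False
    using neg eval_phi[of 3] by simp
qed

end
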